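(* Let $w_g$ be the number of weakly admissible compositions of $g$ whose maximal part is at least $6$. Then $\limsup_{g\to\infty}w_g^{1/g}<\omega=\frac{1+\sqrt5}2$. In particular, the number of NSG-compositions of genus $g$ with maximum at least $6$ has growth-rate strictly smaller than $\omega$.
   Context: A composition $x_1+\cdots+x_{m-1}$ with last maximal part $x_l$ (i.e. $x_1,\dots,x_{l-1}\le x_l$ and $x_{l+1},\dots,x_{m-1}<x_l$) is weakly admissible if $x_l\le x_i+x_{l-i}$ for $1\le i\le l-1$ and $x_l\le 1+x_{l+i}+x_{m-i}$ for $1\le i\le m-1-l$. An NSG-composition is a composition $x_1+\cdots+x_{m-1}$ satisfying $x_{s+t}\le x_s+x_t$ and $x_{m-s-t}\le x_{m-s}+x_{m-t}+1$ for all $s,t\ge1$, $s+t<m$ (equivalently, the Kunz vector $x_j=\#((\mathbb N\setminus S)\cap(j+m\mathbb Z))$ of a numerical semigroup $S$ of multiplicity $m$); its genus is $\sum x_j$. The growth-rate of a family of compositions is $\limsup_{g\to\infty}a_g^{1/g}$ where $a_g$ is the number of members of genus (sum) $g$. *)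

theory Defs
  imports Complex_Main "HOL-Library.Liminf_Limsup" "HOL-Library.Extended_Real"
begin

text \<open>A composition x_1 + ... + x_{m-1} is represented by the list xs = [x_1, ..., x_{m-1}],
  so m = length xs + 1.  Parts are 1-indexed via part.\<close>

definition part :: "nat list \<Rightarrow> nat \<Rightarrow> nat" where
  "part xs i = xs ! (i - 1)"

definition composition_of :: "nat \<Rightarrow> nat list \<Rightarrow> bool" where
  "composition_of g xs \<longleftrightarrow> (\<forall>x\<in>set xs. 0 < x) \<and> sum_list xs = g"

definition is_last_max :: "nat list \<Rightarrow> nat \<Rightarrow> bool" where
  "is_last_max xs l \<longleftrightarrow> 1 \<le> l \<and> l \<le> length xs
     \<and> (\<forall>i. 1 \<le> i \<and> i < l \<longrightarrow> part xs i \<le> part xs l)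
     \<and> (\<forall>i. l < i \<and> i \<le> length xs \<longrightarrow> part xs i < part xs l)"

definition weakly_admissible :: "nat list \<Rightarrow> bool" where
  "weakly_admissible xs \<longleftrightarrow> (\<exists>l. is_last_max xs l
     \<and> (\<forall>i. 1 \<le> i \<and> i \<le> l - 1 \<longrightarrow> part xs l \<le> part xs i + part xs (l - i))
     \<and> (\<forall>i. 1 \<le> i \<and> i \<le> (length xs + 1) - 1 - l \<longrightarrow>
            part xs l \<le> 1 + part xs (l + i) + part xs ((length xs + 1) - i)))"

definition nsg_composition :: "nat list \<Rightarrow> bool" where
  "nsg_composition xs \<longleftrightarrow> (\<forall>x\<in>set xs. 0 < x) \<and>
     (\<forall>s t. 1 \<le> s \<and> 1 \<le> t \<and> s + t < length xs + 1 \<longrightarrow>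
        part xs (s + t) \<le> part xs s + part xs t \<and>
        part xs ((length xs + 1) - s - t) \<le> part xs ((length xs + 1) - s) + part xs ((length xs + 1) - t) + 1)"

definition growth_rate :: "(nat \<Rightarrow> nat) \<Rightarrow> ereal" where
  "growth_rate a = limsup (\<lambda>g. ereal (root g (real (a g))))"

definition w_count :: "nat \<Rightarrow> nat" where
  "w_count g = card {xs. composition_of g xs \<and> weakly_admissible xs \<and> xs \<noteq> [] \<and> Max (set xs) \<ge> 6}"

definition nsg_count :: "nat \<Rightarrow> nat" where
  "nsg_count g = card {xs. composition_of g xs \<and> nsg_composition xs \<and> xs \<noteq> [] \<and> Max (set xs) \<ge> 6}"

end

theory Submission
  imports Defs
begin

(* Cutting a weakly admissible composition with maximum k at its last maximal part leaves a
   prefix and a suffix whose parts lie in [1, k] and whose mirror-image pairs (first + last,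
   second + second-to-last, ...) sum to at least k, resp. k - 1.  Peeling off the outer pair
   of such a list multiplies its generating function at z = 31/50 by at most 9/10 once
   k >= 5, so the z-weighted count of these lists is bounded uniformly in k and in the
   length.  Summing over the maximum k >= 6 gives w_g z^g <= C, that is
   w_g <= C (50/31)^g, and 50/31 is below the golden ratio.  NSG-compositions are weakly
   admissible, so the same bound holds for them. *)

lemma sum_power_le_geometric:
  fixes z :: real
  assumes "finite A" "0 \<le> z" "z < 1"
  shows "(\<Sum>j\<in>A. z ^ j) \<le> 1 / (1 - z)"
proof -
  have "(\<Sum>j\<in>A. z ^ j) \<le> (\<Sum>j<Suc (Max (insert 0 A)). z ^ j)"
    using assms by (intro sum_mono2) (auto simp: less_Suc_eq_le)
  also have "\<dots> = (1 - z ^ Suc (Max (insert 0 A))) / (1 - z)"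
    using assms by (subst sum_gp_strict) auto
  also have "\<dots> \<le> 1 / (1 - z)"
    using assms by (intro divide_right_mono) auto
  finally show ?thesis .
qed

lemma mult_power_antimono:
  fixes z :: real
  assumes "0 \<le> z" "z \<le> 1" "real (Suc N) * z \<le> real N" "N \<le> d"
  shows "real d * z ^ d \<le> real N * z ^ N"
  using \<open>N \<le> d\<close>
proof (induction d rule: dec_induct)
  case (step n)
  have "real (Suc n) * z = real (Suc N) * z + real (n - N) * z"
    using step.hyps by (simp add: of_nat_diff algebra_simps)
  also have "\<dots> \<le> real N + real (n - N)"
    using assms by (intro add_mono mult_left_le) auto
  also have "\<dots> = real n"
    using step.hyps by simp
  finally have "real (Suc n) * z \<le> real n" .
  then have "real (Suc n) * z ^ Suc n \<le> real n * z ^ n"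
    using assms by (simp add: mult.assoc[symmetric] mult_right_mono)
  then show ?case using step.IH by linarith
qed simp

lemma growth_rate_le_geometric:
  fixes C \<rho> :: real
  assumes bound: "\<And>g. real (a g) \<le> C * \<rho> ^ g" and "0 < C" "0 < \<rho>"
  shows "growth_rate a \<le> ereal \<rho>"
proof -
  have "eventually (\<lambda>n. ereal (root n (real (a n))) \<le> ereal (root n C * \<rho>)) sequentially"
    using eventually_gt_at_top[of 0]
  proof eventually_elim
    case (elim n)
    have "root n (real (a n)) \<le> root n (C * \<rho> ^ n)"
      using elim bound by (rule real_root_le_mono)
    also have "\<dots> = root n C * \<rho>"
      using elim assms by (simp add: real_root_mult real_root_power_cancel)
    finally show ?case by simp
  qed
  then have "growth_rate a \<le> limsup (\<lambda>n. ereal (root n C * \<rho>))"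
    unfolding growth_rate_def by (rule Limsup_mono)
  also have "\<dots> = ereal \<rho>"
    using tendsto_mult_right[OF LIMSEQ_root_const[OF \<open>0 < C\<close>], of \<rho>]
    by (intro lim_imp_Limsup) auto
  finally show ?thesis .
qed

lemma less_golden_ratio: "50/31 < (1 + sqrt 5) / 2"
proof -
  have "69/31 < sqrt 5"
    by (rule real_less_rsqrt) (simp add: power_divide)
  then show ?thesis by simp
qed

definition mirror_bounded :: "nat \<Rightarrow> nat list \<Rightarrow> bool" where
  "mirror_bounded d p \<longleftrightarrow> set p \<subseteq> {1..d} \<and> (\<forall>i<length p. d \<le> p ! i + rev p ! i)"

lemma mirror_bounded_Cons_snoc:
  "mirror_bounded d (a # m @ [b]) \<longleftrightarrow>
     a \<in> {1..d} \<and> b \<in> {1..d} \<and> d \<le> a + b \<and> mirror_bounded d m"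
proof -
  let ?P = "\<lambda>i. d \<le> (a # m @ [b]) ! i + (b # rev m @ [a]) ! i"
  have "(\<forall>i<Suc (Suc (length m)). ?P i) \<longleftrightarrow>
      ?P 0 \<and> (\<forall>i<length m. ?P (Suc i)) \<and> ?P (Suc (length m))"
    unfolding All_less_Suc2[of "Suc (length m)"] All_less_Suc[of "length m"] by blast
  also have "\<dots> \<longleftrightarrow> d \<le> a + b \<and> (\<forall>i<length m. d \<le> m ! i + rev m ! i)"
    by (auto simp: nth_append)
  finally show ?thesis
    unfolding mirror_bounded_def by auto
qed

lemma finite_mirror_bounded: "finite {p. mirror_bounded d p \<and> length p \<le> n}"
  by (rule finite_subset[OF _ finite_lists_length_le[of "{1..d}" n]])
     (auto simp: mirror_bounded_def)

definition end_pairs :: "nat \<Rightarrow> (nat \<times> nat) set" where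
  "end_pairs d = {(a, b). a \<in> {1..d} \<and> b \<in> {1..d} \<and> d \<le> a + b}"

lemma mirror_bounded_length_SucSuc:
  "{p. mirror_bounded d p \<and> length p = Suc (Suc n)} =
     (\<lambda>((a, b), m). a # m @ [b]) ` (end_pairs d \<times> {m. mirror_bounded d m \<and> length m = n})"
proof (intro equalityI subsetI)
  fix p assume "p \<in> {p. mirror_bounded d p \<and> length p = Suc (Suc n)}"
  then have p: "mirror_bounded d p" "length p = Suc (Suc n)" by auto
  then obtain a r where "p = a # r" by (cases p) auto
  moreover obtain m b where "r = m @ [b]"
    using p \<open>p = a # r\<close> by (cases r rule: rev_exhaust) auto
  ultimately have "p = a # m @ [b]" "length m = n" "mirror_bounded d p"
    using p by auto
  then show "p \<in> (\<lambda>((a, b), m). a # m @ [b]) ` (end_pairs d \<times> {m. mirror_bounded d m \<and> length m = n})"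
    by (force simp: mirror_bounded_Cons_snoc end_pairs_def)
qed (auto simp: mirror_bounded_Cons_snoc end_pairs_def)

definition mirror_gf :: "nat \<Rightarrow> real \<Rightarrow> nat \<Rightarrow> real" where
  "mirror_gf d z n = (\<Sum>p | mirror_bounded d p \<and> length p = n. z ^ sum_list p)"

lemma mirror_gf_0: "mirror_gf d z 0 = 1"
proof -
  have "{p. mirror_bounded d p \<and> length p = 0} = {[]}"
    by (auto simp: mirror_bounded_def)
  then show ?thesis by (simp add: mirror_gf_def)
qed

lemma mirror_gf_1_le:
  fixes z :: real
  assumes "0 \<le> z" "z < 1"
  shows "mirror_gf d z 1 \<le> 1 / (1 - z)"
proof -
  have "mirror_gf d z 1 \<le> (\<Sum>p\<in>(\<lambda>a. [a]) ` {1..d}. z ^ sum_list p)"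
    unfolding mirror_gf_def using assms
    by (intro sum_mono2) (auto simp: mirror_bounded_def length_Suc_conv)
  also have "\<dots> = (\<Sum>a\<in>{1..d}. z ^ a)"
    by (subst sum.reindex) (auto simp: inj_on_def)
  also have "\<dots> \<le> 1 / (1 - z)"
    using assms by (intro sum_power_le_geometric) auto
  finally show ?thesis .
qed

lemma mirror_gf_SucSuc:
  "mirror_gf d z (Suc (Suc n)) = (\<Sum>(a, b)\<in>end_pairs d. z ^ (a + b)) * mirror_gf d z n"
proof -
  have inj: "inj_on (\<lambda>((a, b), m). a # m @ [b] :: nat list) X" for X
    by (auto simp: inj_on_def)
  have "mirror_gf d z (Suc (Suc n)) =
      (\<Sum>((a, b), m)\<in>end_pairs d \<times> {m. mirror_bounded d m \<and> length m = n}. z ^ (a + b) * z ^ sum_list m)"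
    unfolding mirror_gf_def mirror_bounded_length_SucSuc
    by (subst sum.reindex[OF inj]) (auto intro!: sum.cong simp: power_add)
  also have "\<dots> = (\<Sum>(a, b)\<in>end_pairs d. z ^ (a + b)) * mirror_gf d z n"
    by (simp add: mirror_gf_def sum_product sum.cartesian_product case_prod_beta)
  finally show ?thesis .
qed

lemma end_pairs_gf_le:
  fixes z :: real
  assumes "0 \<le> z" "z < 1"
  shows "(\<Sum>(a, b)\<in>end_pairs d. z ^ (a + b)) \<le> real d * z ^ d / (1 - z)"
proof -
  have "(\<Sum>(a, b)\<in>end_pairs d. z ^ (a + b)) = (\<Sum>a\<in>{1..d}. \<Sum>b | b \<in> {1..d} \<and> d \<le> a + b. z ^ (a + b))"
    by (subst sum.Sigma) (auto simp: end_pairs_def Sigma_def intro!: sum.cong)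
  also have "\<dots> \<le> (\<Sum>a\<in>{1..d}. z ^ d / (1 - z))"
  proof (rule sum_mono)
    fix a assume "a \<in> {1..d}"
    let ?B = "{b. b \<in> {1..d} \<and> d \<le> a + b}"
    have "(\<Sum>b\<in>?B. z ^ (a + b)) = z ^ d * (\<Sum>j\<in>(\<lambda>b. a + b - d) ` ?B. z ^ j)"
      by (subst sum.reindex) (auto simp: inj_on_def sum_distrib_left power_add[symmetric])
    also have "\<dots> \<le> z ^ d * (1 / (1 - z))"
      using assms by (intro mult_left_mono sum_power_le_geometric) auto
    finally show "(\<Sum>b\<in>?B. z ^ (a + b)) \<le> z ^ d / (1 - z)" by simp
  qed
  finally show ?thesis by simp
qed

lemma end_pairs_gf_le_nine_tenths:
  assumes "5 \<le> d"
  shows "(\<Sum>(a, b)\<in>end_pairs d. (31/50::real) ^ (a + b)) \<le> 9/10"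
proof (cases "d = 5")
  case True
  \<comment> \<open>Here the crude bound of \<open>end_pairs_gf_le\<close> exceeds 9/10, so the sum is computed.\<close>
  have range5: "{1..5::nat} = {1, 2, 3, 4, 5}" by auto
  have "end_pairs 5 = {x \<in> {1..5} \<times> {1..5}. 5 \<le> fst x + snd x}"
    by (auto simp: end_pairs_def)
  then have "(\<Sum>(a, b)\<in>end_pairs 5. (31/50::real) ^ (a + b)) =
      (\<Sum>a\<in>{1..5}. \<Sum>b\<in>{1..5}. if 5 \<le> a + b then (31/50) ^ (a + b) else 0)"
    by (simp add: sum.inter_filter sum.cartesian_product case_prod_beta)
  also have "\<dots> = 4 * (31/50) ^ 5 + 5 * (31/50) ^ 6 + 4 * (31/50) ^ 7 + 3 * (31/50) ^ 8
      + 2 * (31/50) ^ 9 + (31/50) ^ 10"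
    unfolding range5 by simp
  also have "\<dots> \<le> 9/10"
    by (simp add: power_divide)
  finally show ?thesis using True by simp
next
  case False
  have "(\<Sum>(a, b)\<in>end_pairs d. (31/50::real) ^ (a + b)) \<le> real d * (31/50) ^ d / (1 - 31/50)"
    by (rule end_pairs_gf_le) auto
  also have "\<dots> \<le> real 6 * (31/50) ^ 6 / (1 - 31/50)"
    using False assms by (intro divide_right_mono mult_power_antimono) auto
  also have "\<dots> \<le> 9/10"
    by (simp add: power_divide)
  finally show ?thesis .
qed

lemma mirror_gf_le:
  assumes "5 \<le> d"
  shows "mirror_gf d (31/50) n \<le> 3 * (19/20) ^ n"
proof (induction n rule: nat_induct2)
  case 0 show ?case by (simp add: mirror_gf_0)
next
  case 1 show ?case using mirror_gf_1_le[of "31/50" d] by simp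
next
  case (step n)
  have "mirror_gf d (31/50) (n + 2) = (\<Sum>(a, b)\<in>end_pairs d. (31/50) ^ (a + b)) * mirror_gf d (31/50) n"
    by (simp add: mirror_gf_SucSuc)
  also have "\<dots> \<le> 9/10 * mirror_gf d (31/50) n"
    by (intro mult_right_mono end_pairs_gf_le_nine_tenths assms) (simp add: mirror_gf_def sum_nonneg)
  also have "\<dots> \<le> 9/10 * (3 * (19/20) ^ n)"
    using step.IH by simp
  also have "\<dots> \<le> 3 * (19/20) ^ (n + 2)"
    by simp
  finally show ?case .
qed

lemma mirror_weight_le:
  assumes "5 \<le> d"
  shows "(\<Sum>p | mirror_bounded d p \<and> length p \<le> g. (31/50::real) ^ sum_list p) \<le> 60"
proof -
  have "{p. mirror_bounded d p \<and> length p \<le> g} = (\<Union>n\<le>g. {p. mirror_bounded d p \<and> length p = n})"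
    by auto
  then have "(\<Sum>p | mirror_bounded d p \<and> length p \<le> g. (31/50::real) ^ sum_list p) =
      (\<Sum>n\<le>g. mirror_gf d (31/50) n)"
    unfolding mirror_gf_def
    by (auto intro!: sum.UNION_disjoint finite_subset[OF _ finite_mirror_bounded])
  also have "\<dots> \<le> (\<Sum>n<Suc g. 3 * (19/20) ^ n)"
    unfolding lessThan_Suc_atMost by (intro sum_mono mirror_gf_le assms)
  also have "\<dots> = 3 * ((1 - (19/20) ^ Suc g) / (1 - 19/20))"
    by (simp add: sum_distrib_left[symmetric] sum_gp_strict)
  also have "\<dots> \<le> 60"
    by simp
  finally show ?thesis .
qed

lemma length_le_sum_list: "\<forall>x\<in>set xs. (0::nat) < x \<Longrightarrow> length xs \<le> sum_list xs"
  by (induction xs) auto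

lemma finite_compositions: "finite {xs. composition_of g xs}"
proof (rule finite_subset[OF _ finite_lists_length_le[of "{..g}" g]])
  show "{xs. composition_of g xs} \<subseteq> {xs. set xs \<subseteq> {..g} \<and> length xs \<le> g}"
    by (auto simp: composition_of_def member_le_sum_list length_le_sum_list)
qed simp

lemma is_last_max_eq_Max:
  assumes "is_last_max xs l"
  shows "part xs l = Max (set xs)"
proof (rule Max_eqI[symmetric])
  show "part xs l \<in> set xs"
    using assms by (auto simp: is_last_max_def part_def)
  fix x assume "x \<in> set xs"
  then obtain i where "i < length xs" "x = part xs (Suc i)"
    by (auto simp: in_set_conv_nth part_def)
  then show "x \<le> part xs l"
    using assms unfolding is_last_max_def
    by (cases "Suc i" l rule: linorder_cases) auto
qed simp

lemma mirror_bounded_prefix: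
  assumes lm: "is_last_max xs l" and pos: "\<forall>x\<in>set xs. 0 < x"
    and left: "\<forall>i. 1 \<le> i \<and> i \<le> l - 1 \<longrightarrow> part xs l \<le> part xs i + part xs (l - i)"
  shows "mirror_bounded (Max (set xs)) (take (l - 1) xs)"
  unfolding mirror_bounded_def
proof (intro conjI allI impI)
  show "set (take (l - 1) xs) \<subseteq> {1..Max (set xs)}"
    using pos set_take_subset[of "l - 1" xs] by (auto simp: Suc_le_eq)
  fix i assume "i < length (take (l - 1) xs)"
  then have i: "i < l - 1" "l \<le> length xs"
    using lm by (auto simp: is_last_max_def)
  then have "take (l - 1) xs ! i = part xs (Suc i)"
    and "rev (take (l - 1) xs) ! i = part xs (l - Suc i)"
    by (simp_all add: part_def rev_nth)
  then show "Max (set xs) \<le> take (l - 1) xs ! i + rev (take (l - 1) xs) ! i"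
    using left i is_last_max_eq_Max[OF lm] by simp
qed

lemma mirror_bounded_suffix:
  assumes lm: "is_last_max xs l" and pos: "\<forall>x\<in>set xs. 0 < x"
    and right: "\<forall>i. 1 \<le> i \<and> i \<le> length xs - l \<longrightarrow>
                  part xs l \<le> 1 + part xs (l + i) + part xs (length xs + 1 - i)"
  shows "mirror_bounded (Max (set xs) - 1) (drop l xs)"
  unfolding mirror_bounded_def
proof (intro conjI allI impI subsetI)
  fix x assume x: "x \<in> set (drop l xs)"
  then obtain j where "j < length xs - l" "x = drop l xs ! j"
    by (auto simp: in_set_conv_nth)
  then have "l + j < length xs" "x = part xs (l + Suc j)"
    by (auto simp: part_def)
  then have "x < Max (set xs)"
    using lm is_last_max_eq_Max[OF lm] unfolding is_last_max_def by auto
  moreover have "0 < x"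
    using pos set_drop_subset[of l xs] x by auto
  ultimately show "x \<in> {1..Max (set xs) - 1}"
    by simp
next
  fix i assume i: "i < length (drop l xs)"
  then have "drop l xs ! i = part xs (l + Suc i)"
    and "rev (drop l xs) ! i = part xs (length xs + 1 - Suc i)"
    by (simp_all add: part_def rev_nth)
  then show "Max (set xs) - 1 \<le> drop l xs ! i + rev (drop l xs) ! i"
    using right[rule_format, of "Suc i"] i is_last_max_eq_Max[OF lm] by simp
qed

lemma weakly_admissible_split:
  assumes pos: "\<forall>x\<in>set xs. 0 < x" and "weakly_admissible xs"
  obtains p q where "xs = p @ Max (set xs) # q"
    and "mirror_bounded (Max (set xs)) p" and "mirror_bounded (Max (set xs) - 1) q"
proof -
  obtain l where lm: "is_last_max xs l"
    and left: "\<forall>i. 1 \<le> i \<and> i \<le> l - 1 \<longrightarrow> part xs l \<le> part xs i + part xs (l - i)"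
    and right: "\<forall>i. 1 \<le> i \<and> i \<le> length xs - l \<longrightarrow>
                  part xs l \<le> 1 + part xs (l + i) + part xs (length xs + 1 - i)"
    using assms(2) unfolding weakly_admissible_def by auto
  have "1 \<le> l" "l \<le> length xs"
    using lm by (simp_all add: is_last_max_def)
  then have "xs = take (l - 1) xs @ Max (set xs) # drop l xs"
    using id_take_nth_drop[of "l - 1" xs] is_last_max_eq_Max[OF lm] by (simp add: part_def)
  with mirror_bounded_prefix[OF lm pos left] mirror_bounded_suffix[OF lm pos right] that
  show thesis by blast
qed

lemma weakly_admissible_compositions_subset:
  "{xs. composition_of g xs \<and> weakly_admissible xs \<and> xs \<noteq> [] \<and> 6 \<le> Max (set xs)} \<subseteq>
     (\<lambda>(k, p, q). p @ k # q) `
       (SIGMA k:{6..g}. {p. mirror_bounded k p \<and> length p \<le> g} \<times>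
                        {q. mirror_bounded (k - 1) q \<and> length q \<le> g})"
proof
  fix xs assume "xs \<in> {xs. composition_of g xs \<and> weakly_admissible xs \<and> xs \<noteq> [] \<and> 6 \<le> Max (set xs)}"
  then have xs: "\<forall>x\<in>set xs. 0 < x" "sum_list xs = g" "weakly_admissible xs" "6 \<le> Max (set xs)"
    "xs \<noteq> []"
    by (auto simp: composition_of_def)
  define k where "k = Max (set xs)"
  obtain p q where split: "xs = p @ k # q" and "mirror_bounded k p" "mirror_bounded (k - 1) q"
    using weakly_admissible_split[OF xs(1,3)] unfolding k_def .
  moreover have "length xs \<le> g"
    using length_le_sum_list[OF xs(1)] xs(2) by simp
  then have "length p \<le> g" "length q \<le> g"
    using split by auto
  moreover have "k \<in> {6..g}"
    using member_le_sum_list[of k xs] xs(2,4,5) by (simp add: k_def)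
  ultimately show "xs \<in> (\<lambda>(k, p, q). p @ k # q) `
       (SIGMA k:{6..g}. {p. mirror_bounded k p \<and> length p \<le> g} \<times>
                        {q. mirror_bounded (k - 1) q \<and> length q \<le> g})"
    by force
qed

lemma w_count_weighted_le: "real (w_count g) * (31/50) ^ g \<le> 3600 * (50/19)"
proof -
  define z :: real where "z = 31/50"
  define M where "M d = {p. mirror_bounded d p \<and> length p \<le> g}" for d
  define W where "W = {xs. composition_of g xs \<and> weakly_admissible xs \<and> xs \<noteq> [] \<and> 6 \<le> Max (set xs)}"
  define D where "D = (SIGMA k:{6..g}. M k \<times> M (k - 1))"
  let ?glue = "\<lambda>(k, p, q). p @ k # q"
  have z: "0 \<le> z" "z < 1"
    by (simp_all add: z_def)
  have finite_D: "finite D"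
    by (auto simp: D_def M_def finite_mirror_bounded)
  have "real (w_count g) * z ^ g = (\<Sum>xs\<in>W. z ^ sum_list xs)"
    by (simp add: w_count_def W_def composition_of_def)
  also have "\<dots> \<le> (\<Sum>xs\<in>?glue ` D. z ^ sum_list xs)"
    using weakly_admissible_compositions_subset[of g] finite_D z
    unfolding W_def D_def M_def by (intro sum_mono2) auto
  also have "\<dots> \<le> (\<Sum>x\<in>D. z ^ sum_list (?glue x))"
    using sum_image_le[of D "\<lambda>xs. z ^ sum_list xs" ?glue] finite_D z by (simp add: o_def)
  also have "\<dots> = (\<Sum>(k, pq)\<in>D. z ^ k * (z ^ sum_list (fst pq) * z ^ sum_list (snd pq)))"
    by (intro sum.cong) (auto simp: power_add)
  also have "\<dots> = (\<Sum>k\<in>{6..g}. \<Sum>pq\<in>M k \<times> M (k - 1). z ^ k * (z ^ sum_list (fst pq) * z ^ sum_list (snd pq)))"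
    unfolding D_def by (rule sum.Sigma[symmetric]) (auto simp: M_def finite_mirror_bounded)
  also have "\<dots> = (\<Sum>k\<in>{6..g}. z ^ k * ((\<Sum>p\<in>M k. z ^ sum_list p) * (\<Sum>q\<in>M (k - 1). z ^ sum_list q)))"
    unfolding sum_product sum.cartesian_product by (simp add: case_prod_beta sum_distrib_left)
  also have "\<dots> \<le> (\<Sum>k\<in>{6..g}. z ^ k * (60 * 60))"
    using z unfolding M_def z_def
    by (intro sum_mono mult_left_mono mult_mono mirror_weight_le) (auto intro: sum_nonneg)
  also have "\<dots> = 3600 * (\<Sum>k\<in>{6..g}. z ^ k)"
    by (subst sum_distrib_left) (simp add: mult.commute)
  also have "\<dots> \<le> 3600 * (50/19)"
    using sum_power_le_geometric[of "{6..g}" z] z by (simp add: z_def)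
  finally show ?thesis
    by (simp add: z_def)
qed

lemma w_count_le: "real (w_count g) \<le> 3600 * (50/19) * (50/31) ^ g"
proof -
  have "real (w_count g) = real (w_count g) * (31/50) ^ g * (50/31) ^ g"
    by (simp flip: power_mult_distrib)
  also have "\<dots> \<le> 3600 * (50/19) * (50/31) ^ g"
    by (intro mult_right_mono w_count_weighted_le) simp
  finally show ?thesis .
qed

lemma is_last_max_exists:
  assumes "xs \<noteq> []"
  obtains l where "is_last_max xs l"
proof -
  define L where "L = {i. 1 \<le> i \<and> i \<le> length xs \<and> part xs i = Max (set xs)}"
  have "Max (set xs) \<in> set xs"
    using assms by simp
  then obtain j where "j < length xs" "xs ! j = Max (set xs)"
    by (auto simp: in_set_conv_nth)
  then have "Suc j \<in> L"
    by (simp add: L_def part_def)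
  moreover have "finite L"
    by (rule finite_subset[of _ "{1..length xs}"]) (auto simp: L_def)
  ultimately have "Max L \<in> L" and above: "i \<in> L \<Longrightarrow> i \<le> Max L" for i
    by (auto intro: Max_in)
  have part_le: "1 \<le> i \<Longrightarrow> i \<le> length xs \<Longrightarrow> part xs i \<le> Max (set xs)" for i
    by (simp add: part_def)
  have "is_last_max xs (Max L)"
    unfolding is_last_max_def
  proof (intro conjI allI impI)
    show "1 \<le> Max L" "Max L \<le> length xs"
      using \<open>Max L \<in> L\<close> by (simp_all add: L_def)
  next
    fix i assume "1 \<le> i \<and> i < Max L"
    then show "part xs i \<le> part xs (Max L)"
      using \<open>Max L \<in> L\<close> part_le by (auto simp: L_def)
  next
    fix i assume i: "Max L < i \<and> i \<le> length xs"
    then have "i \<notin> L"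
      using above by fastforce
    then show "part xs i < part xs (Max L)"
      using \<open>Max L \<in> L\<close> part_le[of i] i by (auto simp: L_def order_less_le)
  qed
  then show thesis ..
qed

lemma nsg_composition_weakly_admissible:
  assumes "xs \<noteq> []" and nsg: "nsg_composition xs"
  shows "weakly_admissible xs"
proof -
  define n where "n = length xs"
  obtain l where lm: "is_last_max xs l"
    using is_last_max_exists[OF assms(1)] .
  then have l: "1 \<le> l" "l \<le> n"
    by (auto simp: is_last_max_def n_def)
  have sub: "part xs (s + t) \<le> part xs s + part xs t"
    and cosub: "part xs (n + 1 - s - t) \<le> part xs (n + 1 - s) + part xs (n + 1 - t) + 1"
    if "1 \<le> s" "1 \<le> t" "s + t < n + 1" for s t
    using nsg that unfolding nsg_composition_def n_def by blast+
  show ?thesis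
    unfolding weakly_admissible_def
  proof (intro exI conjI allI impI)
    show "is_last_max xs l" by (fact lm)
  next
    fix i assume i: "1 \<le> i \<and> i \<le> l - 1"
    then have "i + (l - i) = l" "1 \<le> l - i"
      by auto
    then show "part xs l \<le> part xs i + part xs (l - i)"
      using sub[of i "l - i"] i l by simp
  next
    fix i assume i: "1 \<le> i \<and> i \<le> (length xs + 1) - 1 - l"
    define s where "s = n + 1 - l - i"
    have s: "1 \<le> s" "1 \<le> i" "s + i < n + 1" and eqs: "n + 1 - s - i = l" "n + 1 - s = l + i"
      using i l unfolding s_def n_def by linarith+
    have "part xs l \<le> part xs (l + i) + part xs (n + 1 - i) + 1"
      using cosub[OF s] by (simp only: eqs add_diff_cancel_right')
    then show "part xs l \<le> 1 + part xs (l + i) + part xs ((length xs + 1) - i)"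
      by (simp add: n_def)
  qed
qed

lemma nsg_count_le_w_count: "nsg_count g \<le> w_count g"
  unfolding nsg_count_def w_count_def
  by (rule card_mono) (auto intro: finite_subset[OF _ finite_compositions] nsg_composition_weakly_admissible)

theorem proposition10p1:
  shows "growth_rate w_count < ereal ((1 + sqrt 5) / 2)
       \<and> growth_rate nsg_count < ereal ((1 + sqrt 5) / 2)"
proof -
  have nsg_bound: "real (nsg_count g) \<le> 3600 * (50/19) * (50/31) ^ g" for g
    using nsg_count_le_w_count[of g] w_count_le[of g] by linarith
  have "growth_rate w_count \<le> ereal (50/31)"
    by (rule growth_rate_le_geometric[OF w_count_le]) simp_all
  moreover have "growth_rate nsg_count \<le> ereal (50/31)"
    by (rule growth_rate_le_geometric[OF nsg_bound]) simp_all
  moreover have "ereal (50/31) < ereal ((1 + sqrt 5) / 2)"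
    using less_golden_ratio by simp
  ultimately show ?thesis
    by (blast intro: le_less_trans)
qed

end
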